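(* Let $n,m\ge 4$, $N = 2^{n-1}$, $M = 2^{m-1}$, $\alpha = 2^{n-2}-1$, $\beta = 2^{m-2}-1$, and let $G = HK$ be an exact product with $H = \langle x\rangle\rtimes\langle y\rangle\cong\mathrm{SD}_{2^n}$ ($x^N = y^2 = 1$, $x^y = x^\alpha$) and $K = \langle z\rangle \rtimes\langle w\rangle \cong \mathrm{SD}_{2^m}$ ($z^M = w^2 = 1$, $z^w = z^\beta$), such that $[x,z] = 1$, $[z,y] = x^r z^a$, $[x,w] = x^s z^b$ and $[y,w] = x^tz^c$ for some $r,s,t \in \mathbb{Z}_N$, $a,b,c\in\mathbb{Z}_M$. Let $n_1$ be a divisor of $N$ and $m_1$ a divisor of $M$. Then $\langle x^{n_1}\rangle$ is the core of $\langle x\rangle$ in $G$ if and only if $b$ has additive order exactly $n_1$ in $\mathbb{Z}_M$; and $\langle z^{m_1}\rangle$ is the core of $\langle z\rangle$ in $G$ if and only if $r$ has additive order exactly $m_1$ in $\mathbb{Z}_N$.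
   Context: Conventions: $[g,h] = g^{-1}h^{-1}gh$, $g^h = h^{-1}gh$. The core of a subgroup $X\le G$ is the largest normal subgroup of $G$ contained in $X$. An exact product $G = HK$ means $G = HK$ with $H\cap K = \{1\}$. $\mathrm{SD}_{2^n}$ denotes the semidihedral group of order $2^n$. *)

theory Defs
  imports "HOL-Algebra.Algebra"
begin

definition commutator :: "('a, 'b) monoid_scheme \<Rightarrow> 'a \<Rightarrow> 'a \<Rightarrow> 'a" where
  "commutator G g h = inv\<^bsub>G\<^esub> g \<otimes>\<^bsub>G\<^esub> inv\<^bsub>G\<^esub> h \<otimes>\<^bsub>G\<^esub> g \<otimes>\<^bsub>G\<^esub> h"

definition is_core :: "('a, 'b) monoid_scheme \<Rightarrow> 'a set \<Rightarrow> 'a set \<Rightarrow> bool" where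
  "is_core G S T \<longleftrightarrow> normal T G \<and> T \<subseteq> S \<and> (\<forall>U. normal U G \<and> U \<subseteq> S \<longrightarrow> U \<subseteq> T)"

definition add_order :: "nat \<Rightarrow> int \<Rightarrow> nat" where
  "add_order M b = (LEAST k::nat. 0 < k \<and> int M dvd int k * b)"

end

theory Submission
  imports Defs
begin

text \<open>
  Conjugation by w sends x^i to x^((1+s)i) z^(bi), while y and z normalise <x>. As <x> and <z>
  meet trivially, a normal subgroup of G inside <x> can only contain x^i when z^(bi) = 1, that is,
  when the additive order k of b modulo |z| divides i; conversely <x^k> is normal, because every
  generator of G maps it into itself. So the core of <x> is <x^k>, and the subgroups <x^d> for the
  divisors d of |x| are pairwise distinct. The core of <z> is obtained in the same way, with y
  twisting z by powers of x.
\<close>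

lemma (in group) mult_inv_cancel_left:
  "x \<in> carrier G \<Longrightarrow> y \<in> carrier G \<Longrightarrow> x \<otimes> (inv x \<otimes> y) = y"
  by (simp add: m_assoc[symmetric])

lemma (in group) conjugation_hom:
  assumes "g \<in> carrier G"
  shows "(\<lambda>h. inv g \<otimes> h \<otimes> g) \<in> hom G G"
  using assms by (intro homI) (simp_all add: m_assoc mult_inv_cancel_left)

lemma (in group) conj_int_pow:
  assumes "g \<in> carrier G" "h \<in> carrier G"
  shows "inv g \<otimes> h [^] (i::int) \<otimes> g = (inv g \<otimes> h \<otimes> g) [^] i"
  using hom_int_pow[OF conjugation_hom[OF assms(1)] assms(2) is_group is_group] .

lemma (in group) conj_by_commutator:
  assumes "g \<in> carrier G" "h \<in> carrier G"
  shows "inv h \<otimes> g \<otimes> h = g \<otimes> commutator G g h"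
  using assms by (simp add: commutator_def m_assoc mult_inv_cancel_left)

lemma (in group) conj_eq_iff_commute:
  assumes "g \<in> carrier G" "h \<in> carrier G"
  shows "inv h \<otimes> g \<otimes> h = g \<longleftrightarrow> g \<otimes> h = h \<otimes> g"
  using assms inv_solve_left'[of g h "g \<otimes> h"] by (simp add: m_assoc)

lemma (in group) commutator_eq_one_iff:
  assumes "g \<in> carrier G" "h \<in> carrier G"
  shows "commutator G g h = \<one> \<longleftrightarrow> g \<otimes> h = h \<otimes> g"
  using assms inv_solve_left'[of \<one> g "inv h \<otimes> g \<otimes> h"] conj_eq_iff_commute[of g h]
  by (simp add: commutator_def m_assoc)

lemma (in group) commuting_int_pows:
  assumes "a \<in> carrier G" "b \<in> carrier G" "a \<otimes> b = b \<otimes> a"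
  shows "a [^] (i::int) \<otimes> b [^] (j::int) = b [^] j \<otimes> a [^] i"
proof -
  have "inv b \<otimes> a [^] i \<otimes> b = a [^] i"
    using assms conj_int_pow[OF assms(2,1)] conj_eq_iff_commute[OF assms(1,2)] by simp
  then have "a [^] i \<otimes> b = b \<otimes> a [^] i"
    using conj_eq_iff_commute[of "a [^] i" b] assms by simp
  then have "inv (a [^] i) \<otimes> b [^] j \<otimes> a [^] i = b [^] j"
    using conj_int_pow[of "a [^] i" b j] conj_eq_iff_commute[of b "a [^] i"] assms by simp
  then show ?thesis
    using conj_eq_iff_commute[of "b [^] j" "a [^] i"] assms by simp
qed

lemma (in group) conj_int_pow_commuting:
  assumes "a \<in> carrier G" "b \<in> carrier G" "a \<otimes> b = b \<otimes> a"
  shows "inv b \<otimes> a [^] (i::int) \<otimes> b = a [^] i" "b \<otimes> a [^] (i::int) \<otimes> inv b = a [^] i"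
proof -
  have "inv b \<otimes> a \<otimes> b = a"
    using assms conj_eq_iff_commute[of a b] by simp
  moreover have "b \<otimes> a \<otimes> inv b = a"
    using assms by (simp add: assms(3)[symmetric] m_assoc)
  ultimately show "inv b \<otimes> a [^] i \<otimes> b = a [^] i" "b \<otimes> a [^] i \<otimes> inv b = a [^] i"
    using assms conj_int_pow[of b a i] conj_int_pow[of "inv b" a i] by simp_all
qed

lemma (in group) set_mult_generate_subset_generate_Un:
  assumes "S \<subseteq> carrier G" "T \<subseteq> carrier G"
  shows "generate G S <#> generate G T \<subseteq> generate G (S \<union> T)"
proof -
  have "generate G S \<subseteq> generate G (S \<union> T)" "generate G T \<subseteq> generate G (S \<union> T)"
    by (simp_all add: mono_generate)
  moreover have "subgroup (generate G (S \<union> T)) G"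
    using assms by (intro generate_is_subgroup) simp
  ultimately show ?thesis
    unfolding set_mult_def by (auto intro: subgroup.m_closed)
qed

lemma (in group) normal_if_generators_conj_closed:
  assumes S: "subgroup S G" and A: "A \<subseteq> carrier G" and gen: "carrier G \<subseteq> generate G A"
    and conj: "\<And>g h. g \<in> A \<Longrightarrow> h \<in> S \<Longrightarrow> inv g \<otimes> h \<otimes> g \<in> S \<and> g \<otimes> h \<otimes> inv g \<in> S"
  shows "S \<lhd> G"
proof -
  define N where "N = {g \<in> carrier G. \<forall>h\<in>S. inv g \<otimes> h \<otimes> g \<in> S \<and> g \<otimes> h \<otimes> inv g \<in> S}"
  have "subgroup N G"
  proof (rule subgroupI)
    show "N \<subseteq> carrier G" "N \<noteq> {}"
      unfolding N_def using subgroup.subset[OF S] by (auto intro!: exI[of _ \<one>])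
    show "inv g \<in> N" if "g \<in> N" for g
      using that unfolding N_def by auto
    show "g \<otimes> g' \<in> N" if "g \<in> N" "g' \<in> N" for g g'
    proof -
      have gc: "g \<in> carrier G" "g' \<in> carrier G" using that unfolding N_def by auto
      have "inv (g \<otimes> g') \<otimes> h \<otimes> (g \<otimes> g') = inv g' \<otimes> (inv g \<otimes> h \<otimes> g) \<otimes> g'"
        and "(g \<otimes> g') \<otimes> h \<otimes> inv (g \<otimes> g') = g \<otimes> (g' \<otimes> h \<otimes> inv g') \<otimes> inv g"
        if "h \<in> carrier G" for h
        using gc that by (simp_all add: inv_mult_group m_assoc)
      then show ?thesis
        using that subgroup.subset[OF S] gc unfolding N_def by auto
    qed
  qed
  moreover have "A \<subseteq> N" using A conj unfolding N_def by auto
  ultimately have "carrier G \<subseteq> N" using gen generate_subgroup_incl by blast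
  then show ?thesis unfolding normal_inv_iff using S unfolding N_def by auto
qed

lemma add_order_pos: "0 < M \<Longrightarrow> 0 < add_order M q"
  and add_order_dvd: "0 < M \<Longrightarrow> int M dvd int (add_order M q) * q"
  using LeastI[where P = "\<lambda>k. 0 < k \<and> int M dvd int k * q" and k = M]
  unfolding add_order_def by auto

lemma add_order_le: "0 < k \<Longrightarrow> int M dvd int k * q \<Longrightarrow> add_order M q \<le> k"
  unfolding add_order_def by (simp add: Least_le)

lemma dvd_mult_iff_add_order_dvd:
  assumes "0 < M"
  shows "int M dvd j * q \<longleftrightarrow> int (add_order M q) dvd j"
proof
  let ?k = "add_order M q"
  have k: "0 < ?k" "int M dvd int ?k * q"
    using add_order_pos[OF assms] add_order_dvd[OF assms] by auto
  assume Mjq: "int M dvd j * q"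
  show "int ?k dvd j"
  proof (rule ccontr)
    assume "\<not> int ?k dvd j"
    then have pos: "0 < j mod int ?k"
      using k(1) by (metis dvd_eq_mod_eq_0 le_less pos_mod_sign of_nat_0_less_iff)
    have lt: "j mod int ?k < int ?k"
      using k(1) by simp
    have "(j mod int ?k) * q = j * q - (int ?k * q) * (j div int ?k)"
      by (simp add: minus_div_mult_eq_mod[symmetric] algebra_simps)
    then have "int M dvd int (nat (j mod int ?k)) * q"
      using Mjq k(2) pos by simp
    then have "?k \<le> nat (j mod int ?k)"
      using pos by (intro add_order_le) simp_all
    then show False using lt pos by (simp add: le_nat_iff)
  qed
next
  assume "int (add_order M q) dvd j"
  then obtain l where "j = int (add_order M q) * l" ..
  then show "int M dvd j * q"
    using add_order_dvd[OF assms] by (simp add: dvd_mult mult.commute mult.left_commute)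
qed

lemma (in group) mem_generate_pow_iff:
  assumes "u \<in> carrier G"
  shows "h \<in> generate G {u [^] (k::nat)} \<longleftrightarrow> (\<exists>j::int. h = u [^] (int k * j))"
  using assms by (simp add: generate_pow int_pow_pow flip: int_pow_int)

lemma (in group) dvd_if_pow_mem_generate_pow:
  assumes u: "u \<in> carrier G" and b: "b dvd ord u" and mem: "u [^] (a::nat) \<in> generate G {u [^] b}"
  shows "b dvd a"
proof -
  obtain j where "u [^] int a = u [^] (int b * j)"
    using mem mem_generate_pow_iff[OF u] by (auto simp: int_pow_int)
  then have "int (ord u) dvd int b * j - int a"
    using int_pow_eq[OF u] by simp
  then have "int b dvd int b * j - int a"
    using b by (meson dvd_trans of_nat_dvd_iff)
  then have "int b dvd int b * j - (int b * j - int a)"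
    by (rule dvd_diff[OF dvd_triv_left])
  then show ?thesis
    by simp
qed

lemma (in group) generate_pow_eq_iff:
  assumes u: "u \<in> carrier G" and "a dvd ord u" "b dvd ord u"
  shows "generate G {u [^] a} = generate G {u [^] b} \<longleftrightarrow> a = b"
proof
  have "u [^] a \<in> generate G {u [^] a}" "u [^] b \<in> generate G {u [^] b}"
    by (simp_all add: generate.incl)
  moreover assume "generate G {u [^] a} = generate G {u [^] b}"
  ultimately show "a = b"
    using dvd_if_pow_mem_generate_pow[OF u] assms(2,3) by (metis dvd_antisym)
qed simp

lemma is_core_unique:
  assumes "is_core G S T"
  shows "is_core G S T' \<longleftrightarrow> T' = T"
  using assms unfolding is_core_def by blast

locale twisted_cyclic = group +
  fixes u v g e :: 'a and s q :: int and c :: nat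
  assumes in_carrier: "u \<in> carrier G" "v \<in> carrier G" "g \<in> carrier G" "e \<in> carrier G"
    and commute: "u \<otimes> v = v \<otimes> u"
    and cyclic_disjoint: "generate G {u} \<inter> generate G {v} \<subseteq> {\<one>}"
    and involutions: "g [^] (2::nat) = \<one>" "e [^] (2::nat) = \<one>"
    and commutator_g: "commutator G u g = u [^] s \<otimes> v [^] q"
    and conj_e: "inv e \<otimes> u \<otimes> e = u [^] c"
    and generators: "carrier G \<subseteq> generate G {u, v, g, e}"
    and ord_v_pos: "0 < ord v"
begin

abbreviation twist_order :: nat where
  "twist_order \<equiv> add_order (ord v) q"

lemma inv_g: "inv g = g" and inv_e: "inv e = e"
  using involutions in_carrier by (simp_all add: numeral_2_eq_2 inv_equality)

lemma conj_g_int_pow: "inv g \<otimes> u [^] (i::int) \<otimes> g = u [^] ((1 + s) * i) \<otimes> v [^] (q * i)"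
proof -
  have "inv g \<otimes> u \<otimes> g = u [^] (1 + s) \<otimes> v [^] q"
    using conj_by_commutator[of u g] commutator_g in_carrier by (simp add: int_pow_mult m_assoc)
  then have "inv g \<otimes> u [^] i \<otimes> g = (u [^] (1 + s) \<otimes> v [^] q) [^] i"
    using conj_int_pow[of g u i] in_carrier by simp
  also have "\<dots> = u [^] ((1 + s) * i) \<otimes> v [^] (q * i)"
    using in_carrier commuting_int_pows[OF _ _ commute]
    by (simp add: int_pow_mult_distrib int_pow_pow)
  finally show ?thesis .
qed

lemma conj_e_int_pow: "inv e \<otimes> u [^] (i::int) \<otimes> e = u [^] (int c * i)"
  using conj_int_pow[of e u i] conj_e in_carrier by (simp add: int_pow_pow flip: int_pow_int)

lemma v_pow_eq_one_iff: "v [^] (q * i) = \<one> \<longleftrightarrow> int twist_order dvd i"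
  using int_pow_eq_id[of v "q * i"] dvd_mult_iff_add_order_dvd[OF ord_v_pos, of i q] in_carrier
  by (simp add: mult.commute)

lemma twist_order_dvd_ord: "twist_order dvd ord u"
proof -
  have "u [^] ((1 + s) * int (ord u)) \<otimes> v [^] (q * int (ord u)) = inv g \<otimes> u [^] int (ord u) \<otimes> g"
    by (rule conj_g_int_pow[symmetric])
  also have "\<dots> = \<one>"
    using in_carrier by (simp add: int_pow_int)
  finally have "u [^] ((1 + s) * int (ord u)) \<otimes> v [^] (q * int (ord u)) = \<one>" .
  moreover have "u [^] ((1 + s) * int (ord u)) = \<one>"
    using int_pow_eq_id[OF in_carrier(1)] by simp
  ultimately have "v [^] (q * int (ord u)) = \<one>"
    using in_carrier by simp
  then show ?thesis
    using v_pow_eq_one_iff by simp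
qed

lemma normal_generate_pow_twist_order: "generate G {u [^] twist_order} \<lhd> G"
proof (rule normal_if_generators_conj_closed[OF _ _ generators])
  show "subgroup (generate G {u [^] twist_order}) G" "{u, v, g, e} \<subseteq> carrier G"
    using in_carrier by (simp_all add: generate_is_subgroup)
next
  fix a h
  assume a: "a \<in> {u, v, g, e}" and "h \<in> generate G {u [^] twist_order}"
  then obtain j where h: "h = u [^] (int twist_order * j)"
    using mem_generate_pow_iff in_carrier by blast
  have v_one: "v [^] (q * (int twist_order * j)) = \<one>"
    using v_pow_eq_one_iff by simp
  from a consider "a \<otimes> u = u \<otimes> a" | "a = g" | "a = e"
    by (auto simp: commute)
  then have "inv a \<otimes> h \<otimes> a \<in> generate G {u [^] twist_order}
      \<and> a \<otimes> h \<otimes> inv a \<in> generate G {u [^] twist_order}"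
  proof cases
    case 1
    then show ?thesis
      using a in_carrier h conj_int_pow_commuting[of u a] \<open>h \<in> _\<close> by auto
  next
    case 2
    have "inv g \<otimes> h \<otimes> g
        = u [^] ((1 + s) * (int twist_order * j)) \<otimes> v [^] (q * (int twist_order * j))"
      using h conj_g_int_pow by simp
    also have "\<dots> = u [^] (int twist_order * ((1 + s) * j))"
      using v_one in_carrier by (simp add: mult.left_commute)
    finally show ?thesis
      using 2 inv_g mem_generate_pow_iff in_carrier by auto
  next
    case 3
    have "inv e \<otimes> h \<otimes> e = u [^] (int twist_order * (int c * j))"
      using h conj_e_int_pow by (simp add: mult.left_commute)
    then show ?thesis
      using 3 inv_e mem_generate_pow_iff in_carrier by auto
  qed
  then show "inv a \<otimes> h \<otimes> a \<in> generate G {u [^] twist_order}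
      \<and> a \<otimes> h \<otimes> inv a \<in> generate G {u [^] twist_order}" .
qed

lemma normal_subset_generate_pow_twist_order:
  assumes U: "U \<lhd> G" "U \<subseteq> generate G {u}"
  shows "U \<subseteq> generate G {u [^] twist_order}"
proof
  fix h assume "h \<in> U"
  then obtain i where i: "h = u [^] (i::int)"
    using U(2) generate_pow in_carrier by blast
  have "g \<otimes> h \<otimes> inv g \<in> U"
    using U(1) \<open>h \<in> U\<close> in_carrier unfolding normal_inv_iff by blast
  then have "u [^] ((1 + s) * i) \<otimes> v [^] (q * i) \<in> generate G {u}"
    using U(2) conj_g_int_pow i inv_g by auto
  then obtain l where l: "u [^] ((1 + s) * i) \<otimes> v [^] (q * i) = u [^] (l::int)"
    using generate_pow in_carrier by auto
  then have "v [^] (q * i) = inv (u [^] ((1 + s) * i)) \<otimes> u [^] l"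
    using in_carrier by (simp add: inv_solve_left)
  also have "\<dots> = u [^] (- ((1 + s) * i) + l)"
    by (simp only: int_pow_mult[OF in_carrier(1)] int_pow_neg[OF in_carrier(1)])
  finally have "v [^] (q * i) = u [^] (- ((1 + s) * i) + l)" .
  then have "v [^] (q * i) \<in> generate G {u} \<inter> generate G {v}"
    using generate_pow[OF in_carrier(1)] generate_pow[OF in_carrier(2)] by blast
  then have "int twist_order dvd i"
    using cyclic_disjoint v_pow_eq_one_iff by auto
  then show "h \<in> generate G {u [^] twist_order}"
    using i mem_generate_pow_iff in_carrier by auto
qed

lemma is_core_generate_pow_twist_order: "is_core G (generate G {u}) (generate G {u [^] twist_order})"
proof -
  have "u [^] twist_order = u [^] int twist_order"
    by (simp add: int_pow_int)
  then have "u [^] twist_order \<in> generate G {u}"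
    using generate_pow[OF in_carrier(1)] by blast
  then have "generate G {u [^] twist_order} \<subseteq> generate G {u}"
    using in_carrier by (intro generate_subgroup_incl generate_is_subgroup) auto
  then show ?thesis
    unfolding is_core_def using normal_generate_pow_twist_order normal_subset_generate_pow_twist_order by blast
qed

lemma is_core_generate_pow_iff:
  assumes "k dvd ord u"
  shows "is_core G (generate G {u}) (generate G {u [^] k}) \<longleftrightarrow> twist_order = k"
  using is_core_unique[OF is_core_generate_pow_twist_order] generate_pow_eq_iff[OF in_carrier(1) assms twist_order_dvd_ord]
  by auto

end

theorem lemma6p4:
  fixes G (structure)
    and x y z w :: 'a
    and n m n1 m1 :: nat
    and r s t a b c :: int
  assumes grp: "group G"
    and nm: "n \<ge> 4" "m \<ge> 4"
    and elts: "x \<in> carrier G" "y \<in> carrier G" "z \<in> carrier G" "w \<in> carrier G"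
    \<comment> \<open>H = <x> \<rtimes> <y> \<cong> SD_{2^n}\<close>
    and Hx: "group.ord G x = 2 ^ (n - 1)"
    and Hy: "y [^] (2::nat) = \<one>" "y \<notin> generate G {x}"
    and Hxy: "inv y \<otimes> x \<otimes> y = x [^] (2 ^ (n - 2) - 1 :: nat)"
    \<comment> \<open>K = <z> \<rtimes> <w> \<cong> SD_{2^m}\<close>
    and Kz: "group.ord G z = 2 ^ (m - 1)"
    and Kw: "w [^] (2::nat) = \<one>" "w \<notin> generate G {z}"
    and Kzw: "inv w \<otimes> z \<otimes> w = z [^] (2 ^ (m - 2) - 1 :: nat)"
    \<comment> \<open>exact product G = HK\<close>
    and exact: "carrier G = generate G {x, y} <#> generate G {z, w}"
               "generate G {x, y} \<inter> generate G {z, w} = {\<one>}"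
    \<comment> \<open>commutator relations\<close>
    and rng: "0 \<le> r" "r < 2 ^ (n - 1)" "0 \<le> s" "s < 2 ^ (n - 1)" "0 \<le> t" "t < 2 ^ (n - 1)"
             "0 \<le> a" "a < 2 ^ (m - 1)" "0 \<le> b" "b < 2 ^ (m - 1)" "0 \<le> c" "c < 2 ^ (m - 1)"
    and c1: "commutator G x z = \<one>"
    and c2: "commutator G z y = x [^] r \<otimes> z [^] a"
    and c3: "commutator G x w = x [^] s \<otimes> z [^] b"
    and c4: "commutator G y w = x [^] t \<otimes> z [^] c"
    and divs: "n1 dvd 2 ^ (n - 1)" "m1 dvd 2 ^ (m - 1)"
  shows "(is_core G (generate G {x}) (generate G {x [^] n1})
            \<longleftrightarrow> add_order (2 ^ (m - 1)) b = n1)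
       \<and> (is_core G (generate G {z}) (generate G {z [^] m1})
            \<longleftrightarrow> add_order (2 ^ (n - 1)) r = m1)"
proof -
  interpret group G by (rule grp)
  note x = elts(1) and z = elts(3)
  have xz: "x \<otimes> z = z \<otimes> x"
    using c1 commutator_eq_one_iff[OF x z] by simp
  have "generate G {x} \<subseteq> generate G {x, y}" "generate G {z} \<subseteq> generate G {z, w}"
    by (simp_all add: mono_generate)
  then have disjoint: "generate G {x} \<inter> generate G {z} \<subseteq> {\<one>}"
    using exact(2) by blast
  have "carrier G \<subseteq> generate G ({x, y} \<union> {z, w})"
    using exact(1) set_mult_generate_subset_generate_Un[of "{x, y}" "{z, w}"] elts by simp
  moreover have "{x, y} \<union> {z, w} = {x, z, w, y}" "{x, y} \<union> {z, w} = {z, x, y, w}"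
    by auto
  ultimately have gens: "carrier G \<subseteq> generate G {x, z, w, y}" "carrier G \<subseteq> generate G {z, x, y, w}"
    by simp_all
  have c2': "commutator G z y = z [^] a \<otimes> x [^] r"
    using c2 commuting_int_pows[OF x z xz] by simp
  interpret X: twisted_cyclic G x z w y s b "2 ^ (n - 2) - 1"
    using grp elts xz disjoint Kw(1) Hy(1) c3 Hxy gens(1) Kz by unfold_locales simp_all
  interpret Z: twisted_cyclic G z x y w a r "2 ^ (m - 2) - 1"
    using grp elts xz disjoint Hy(1) Kw(1) c2' Kzw gens(2) Hx by unfold_locales auto
  show ?thesis
    using X.is_core_generate_pow_iff[of n1] Z.is_core_generate_pow_iff[of m1] Hx Kz divs by auto
qed

end
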